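(* Let $G$ be a second countable locally compact abelian group, $\varLambda\subseteq G$ uniformly discrete, $\mathcal{A}=(A_n)_n$ a van Hove sequence, and $F_n=\varLambda\cap A_n$. (a) If the density autocorrelation $\gamma_{\mathrm{dens}}$ of $\varLambda$ exists with respect to $\mathcal{A}$, then the density $\mathrm{dens}_{\mathcal{A}}(\varLambda)=\lim_n\frac{\mathrm{card}(F_n)}{\mathrm{vol}(A_n)}$ exists and $\gamma_{\mathrm{dens}}(\{0\})=\mathrm{dens}_{\mathcal{A}}(\varLambda)$. (b) If the counting autocorrelation $\gamma_{\mathrm{count}}$ exists with respect to $\mathcal{A}$, then the following are equivalent: (i) $\gamma_{\mathrm{count}}(\{0\})=1$; (ii) $(F_n)_n$ contains a subsequence of nonempty sets; (iii) there exists $N$ such that $F_n\ne\emptyset$ for all $n>N$; (iv) $\gamma_{\mathrm{count}}\ne0$.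
   Context: $\mathrm{vol}$ is Haar measure. Uniformly discrete: there is a nonempty open $U$ such that each $t+U$ meets $\varLambda$ in at most one point. A van Hove sequence is a sequence of compact sets $A_n$ of positive Haar measure with $\mathrm{vol}(\partial^K A_n)/\mathrm{vol}(A_n)\to0$ for all compact $K$, where $\partial^K A=((A+K)\setminus A^\circ)\cup((\overline{G\setminus A}-K)\cap A)$. For finite $F$, $\gamma_F=\frac{1}{\mathrm{card}(F)}\sum_{x,y\in F}\delta_{x-y}$ if $F\ne\emptyset$, $\gamma_\emptyset=0$; $\gamma_n=\frac{1}{\mathrm{vol}(A_n)}\sum_{x,y\in F_n}\delta_{x-y}$. The density (resp. counting) autocorrelation is the vague limit of $\gamma_n$ (resp. $\gamma_{F_n}$). *)

theory Defs
  imports "HOL-Analysis.Analysis"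
begin

definition is_haar_measure :: "'a::topological_ab_group_add measure \<Rightarrow> bool" where
  "is_haar_measure \<mu> \<longleftrightarrow>
     sets \<mu> = sets borel \<and>
     (\<forall>S\<in>sets borel. \<forall>t. emeasure \<mu> ((+) t ` S) = emeasure \<mu> S) \<and>
     (\<forall>K. compact K \<longrightarrow> emeasure \<mu> K < \<infinity>) \<and>
     (\<forall>U. open U \<and> U \<noteq> {} \<longrightarrow> emeasure \<mu> U > 0) \<and>
     (\<forall>S\<in>sets borel. emeasure \<mu> S = (INF U\<in>{U. open U \<and> S \<subseteq> U}. emeasure \<mu> U)) \<and>
     (\<forall>U. open U \<longrightarrow> emeasure \<mu> U = (SUP K\<in>{K. compact K \<and> K \<subseteq> U}. emeasure \<mu> K))"

definition radon_measure :: "'a::topological_space measure \<Rightarrow> bool" where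
  "radon_measure \<mu> \<longleftrightarrow> sets \<mu> = sets borel \<and> (\<forall>K. compact K \<longrightarrow> emeasure \<mu> K < \<infinity>)"

definition uniformly_discrete :: "'a::{topological_space, plus} set \<Rightarrow> bool" where
  "uniformly_discrete L \<longleftrightarrow>
     (\<exists>U. open U \<and> U \<noteq> {} \<and>
        (\<forall>t. \<forall>x\<in>L \<inter> ((+) t ` U). \<forall>y\<in>L \<inter> ((+) t ` U). x = y))"

definition van_hove_boundary :: "'a::{topological_space, ab_group_add} set \<Rightarrow> 'a set \<Rightarrow> 'a set" where
  "van_hove_boundary K A =
     ({a + k | a k. a \<in> A \<and> k \<in> K} - interior A) \<union>
     ({x - k | x k. x \<in> closure (UNIV - A) \<and> k \<in> K} \<inter> A)"

definition van_hove :: "'a::{topological_space, ab_group_add} measure \<Rightarrow> (nat \<Rightarrow> 'a set) \<Rightarrow> bool" where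
  "van_hove vol A \<longleftrightarrow>
     (\<forall>n. compact (A n) \<and> emeasure vol (A n) > 0) \<and>
     (\<forall>K. compact K \<longrightarrow>
        (\<lambda>n. measure vol (van_hove_boundary K (A n)) / measure vol (A n)) \<longlonglongrightarrow> 0)"

text \<open>The measure  c * sum_{x,y in F} delta_{x-y}  on the Borel sets.\<close>
definition diff_dirac_sum :: "real \<Rightarrow> 'a::{topological_space, ab_group_add} set \<Rightarrow> 'a measure" where
  "diff_dirac_sum c F = measure_of UNIV (sets borel)
     (\<lambda>S. ennreal (c * real (card {(x, y). x \<in> F \<and> y \<in> F \<and> x - y \<in> S})))"

definition gamma_count :: "'a::{topological_space, ab_group_add} set \<Rightarrow> 'a measure" where
  "gamma_count F = (if F = {} then null_measure borel else diff_dirac_sum (1 / real (card F)) F)"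

definition gamma_dens :: "'a::{topological_space, ab_group_add} measure \<Rightarrow> 'a set \<Rightarrow> 'a set \<Rightarrow> 'a measure" where
  "gamma_dens vol A F = diff_dirac_sum (1 / measure vol A) F"

definition vague_converges :: "(nat \<Rightarrow> 'a::topological_space measure) \<Rightarrow> 'a measure \<Rightarrow> bool" where
  "vague_converges \<mu>s \<mu> \<longleftrightarrow>
     (\<forall>f :: 'a \<Rightarrow> complex. continuous_on UNIV f \<and> compact (closure {x. f x \<noteq> 0}) \<longrightarrow>
        (\<lambda>n. integral\<^sup>L (\<mu>s n) f) \<longlonglongrightarrow> integral\<^sup>L \<mu> f)"

end

(* A uniformly discrete set L admits an open neighbourhood W of 0 containing no nonzero
   difference of two points of L. Integrated against gamma_n or gamma_{F_n}, a continuous bump g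
   with g 0 = 1 supported in W therefore only sees the diagonal of F_n x F_n, and the integral is
   card F_n / vol A_n, resp. 0 or 1 according as F_n is empty or not, whatever g is. Letting such
   bumps decrease to the indicator of {0}, dominated convergence for the limit measure shows that
   these numbers converge to gamma {0}. In (b) the 0/1 sequence converges, hence is eventually
   constant; if it is eventually 0 then gamma_{F_n} is eventually the zero measure, so gamma
   annihilates all compactly supported continuous functions and, G being sigma-compact, gamma = 0. *)

theory Submission
  imports Defs
begin

lemma Hausdorff_space_euclidean_t2: "Hausdorff_space (euclidean :: 'a::t2_space topology)"
  unfolding Hausdorff_space_def disjnt_def
proof (intro allI impI)
  fix x y :: 'a
  assume "x \<in> topspace euclidean \<and> y \<in> topspace euclidean \<and> x \<noteq> y"
  then show "\<exists>U V. openin euclidean U \<and> openin euclidean V \<and> x \<in> U \<and> y \<in> V \<and> U \<inter> V = {}"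
    using hausdorff[of x y] by auto
qed

lemma Urysohn_locally_compact:
  fixes K W :: "'a::t2_space set"
  assumes lc: "locally_compact_space (euclidean :: 'a topology)"
    and "compact K" "open W" "K \<subseteq> W"
  obtains g :: "'a \<Rightarrow> real"
  where "continuous_on UNIV g" "\<And>x. 0 \<le> g x \<and> g x \<le> 1" "\<And>x. x \<in> K \<Longrightarrow> g x = 1"
    "{x. g x \<noteq> 0} \<subseteq> W" "compact (closure {x. g x \<noteq> 0})"
proof -
  have H: "Hausdorff_space (euclidean :: 'a topology)"
    by (rule Hausdorff_space_euclidean_t2)
  obtain U C where U: "open U" "K \<subseteq> U" "U \<subseteq> C" and C: "compact C" "closed C"
    using lc \<open>compact K\<close>
    unfolding locally_compact_space_compact_closed_compact[OF disjI1[OF H]] by auto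
  have "completely_regular_space (euclidean :: 'a topology)"
    using lc H completely_regular_eq_regular_space locally_compact_Hausdorff_imp_regular_space
    by blast
  moreover have "compactin euclidean K"
    using \<open>compact K\<close> by simp
  moreover have "closedin euclidean (- (U \<inter> W))"
    using U \<open>open W\<close> by auto
  moreover have "disjnt K (- (U \<inter> W))"
    using U \<open>K \<subseteq> W\<close> by (auto simp: disjnt_def)
  ultimately obtain g where g: "continuous_map euclidean (top_of_set {0..1::real}) g"
    "g ` (- (U \<inter> W)) \<subseteq> {0}" "g ` K \<subseteq> {1}"
    by (rule Urysohn_completely_regular_compact_closed[OF zero_le_one])
  have supp: "{x. g x \<noteq> 0} \<subseteq> U \<inter> W"
    using g(2) by auto
  then have "closure {x. g x \<noteq> 0} \<subseteq> C"
    using U C by (meson closure_minimal le_inf_iff order_trans)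
  then have compact_supp: "compact (closure {x. g x \<noteq> 0})"
    using compact_Int_closed[OF C(1) closed_closure, of "{x. g x \<noteq> 0}"] by (simp add: inf_absorb2)
  have "continuous_on UNIV g" "\<And>x. 0 \<le> g x \<and> g x \<le> 1"
    using g(1) by (auto simp: continuous_map_in_subtopology)
  moreover have "\<And>x. x \<in> K \<Longrightarrow> g x = 1"
    using g(3) by blast
  moreover have "{x. g x \<noteq> 0} \<subseteq> W"
    using supp by blast
  ultimately show thesis
    using compact_supp by (rule that)
qed

lemma locally_compact_imp_countable_compact_cover:
  assumes "locally_compact_space (euclidean :: 'a::{t2_space, second_countable_topology} topology)"
  obtains \<C> :: "'a::{t2_space, second_countable_topology} set set"
  where "countable \<C>" "\<Union>\<C> = UNIV" "\<And>C. C \<in> \<C> \<Longrightarrow> compact C"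
proof -
  define \<U> where "\<U> = {U :: 'a set. open U \<and> compact (closure U)}"
  have "\<Union>\<U> = UNIV"
    using assms
    unfolding locally_compact_space_compact_closure_of[OF disjI1[OF Hausdorff_space_euclidean_t2]]
    by (simp add: \<U>_def) blast
  obtain \<U>' where \<U>': "\<U>' \<subseteq> \<U>" "countable \<U>'" "\<Union>\<U>' = \<Union>\<U>"
    using Lindelof[of \<U>] by (auto simp: \<U>_def)
  show thesis
  proof (rule that)
    show "countable (closure ` \<U>')"
      using \<U>' by simp
    have "\<Union>\<U>' \<subseteq> \<Union>(closure ` \<U>')"
      using closure_subset by blast
    then show "\<Union>(closure ` \<U>') = UNIV"
      using \<U>'(3) \<open>\<Union>\<U> = UNIV\<close> by (simp add: top.extremum_unique)
    show "compact C" if "C \<in> closure ` \<U>'" for C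
      using that \<U>' by (auto simp: \<U>_def)
  qed
qed

lemma open_translation_group:
  fixes U :: "'a::topological_group_add set"
  assumes "open U"
  shows "open ((+) t ` U)"
proof -
  have "(+) t ` U = (\<lambda>x. - t + x) -` U"
  proof (rule set_eqI)
    fix x
    have "x = t + (- t + x)"
      by (simp add: add.assoc[symmetric])
    then show "x \<in> (+) t ` U \<longleftrightarrow> x \<in> (\<lambda>x. - t + x) -` U"
      by (auto simp: add.assoc[symmetric] intro: rev_image_eqI)
  qed
  moreover have "continuous_on UNIV (\<lambda>x. - t + x)"
    by (intro continuous_intros)
  ultimately show ?thesis
    using assms by (simp add: open_vimage)
qed

lemma uniformly_discrete_Int_compact_finite:
  fixes L :: "'a::topological_ab_group_add set"
  assumes "uniformly_discrete L" and "compact K"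
  shows "finite (L \<inter> K)"
proof -
  obtain U where U: "open U" "U \<noteq> {}"
    and sep: "\<And>t x y. x \<in> L \<inter> (+) t ` U \<Longrightarrow> y \<in> L \<inter> (+) t ` U \<Longrightarrow> x = y"
    using assms(1) unfolding uniformly_discrete_def by blast
  obtain u where "u \<in> U"
    using U by blast
  have cover: "K \<subseteq> (\<Union>a\<in>K. (+) (a - u) ` U)"
  proof
    fix a
    assume "a \<in> K"
    moreover have "a = (a - u) + u"
      by simp
    ultimately show "a \<in> (\<Union>a\<in>K. (+) (a - u) ` U)"
      using \<open>u \<in> U\<close> by blast
  qed
  obtain T where "T \<subseteq> K" "finite T" "K \<subseteq> (\<Union>a\<in>T. (+) (a - u) ` U)"
    by (rule compactE_image[OF assms(2) open_translation_group[OF U(1)] cover])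
  have finite_piece: "finite (L \<inter> (+) t ` U)" for t
  proof (cases "L \<inter> (+) t ` U = {}")
    case False
    then obtain x where "x \<in> L \<inter> (+) t ` U"
      by blast
    then have "L \<inter> (+) t ` U \<subseteq> {x}"
      using sep by blast
    then show ?thesis
      by (rule finite_subset) simp
  qed simp
  have "finite (\<Union>a\<in>T. L \<inter> (+) (a - u) ` U)"
    using \<open>finite T\<close> finite_piece by (rule finite_UN_I)
  moreover have "L \<inter> K \<subseteq> (\<Union>a\<in>T. L \<inter> (+) (a - u) ` U)"
    using \<open>K \<subseteq> (\<Union>a\<in>T. (+) (a - u) ` U)\<close> by blast
  ultimately show ?thesis
    by (rule finite_subset[rotated])
qed

lemma uniformly_discrete_imp_separating_nhd:
  fixes L :: "'a::topological_ab_group_add set"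
  assumes "uniformly_discrete L"
  obtains W where "open W" "0 \<in> W" "\<And>x y. x \<in> L \<Longrightarrow> y \<in> L \<Longrightarrow> x - y \<in> W \<Longrightarrow> x = y"
proof -
  obtain U where U: "open U" "U \<noteq> {}"
    and sep: "\<And>t x y. x \<in> L \<inter> (+) t ` U \<Longrightarrow> y \<in> L \<inter> (+) t ` U \<Longrightarrow> x = y"
    using assms unfolding uniformly_discrete_def by blast
  obtain u where "u \<in> U"
    using U by blast
  define W where "W = (+) (- u) ` U"
  show thesis
  proof
    show "open W"
      unfolding W_def by (rule open_translation_group[OF U(1)])
    show "0 \<in> W"
      unfolding W_def using \<open>u \<in> U\<close> by (rule rev_image_eqI) simp
    show "x = y" if "x \<in> L" "y \<in> L" "x - y \<in> W" for x y
    proof (rule sep)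
      obtain v where "v \<in> U" "x - y = - u + v"
        using \<open>x - y \<in> W\<close> unfolding W_def by blast
      then have "x = (y - u) + v"
        by (simp add: algebra_simps)
      then show "x \<in> L \<inter> (+) (y - u) ` U"
        using \<open>x \<in> L\<close> \<open>v \<in> U\<close> by blast
      show "y \<in> L \<inter> (+) (y - u) ` U"
        using \<open>y \<in> L\<close> \<open>u \<in> U\<close> by (auto intro!: rev_image_eqI)
    qed
  qed
qed

lemma diff_dirac_sum_eq_distr:
  fixes F :: "'a::topological_ab_group_add set"
  assumes "finite F" and "c \<ge> 0"
  shows "diff_dirac_sum c F =
    distr (density (count_space (F \<times> F)) (\<lambda>_. ennreal c)) borel (\<lambda>(x, y). x - y)"
    (is "_ = ?N")
proof -
  have meas: "(\<lambda>(x, y). x - y) \<in> measurable (density (count_space (F \<times> F)) (\<lambda>_. ennreal c)) borel"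
    by (simp add: measurable_count_space_eq1 cong: measurable_cong_sets)
  have "?N = measure_of UNIV (sets borel) (emeasure ?N)"
    using measure_of_of_measure[of ?N] by simp
  also have "\<dots> = diff_dirac_sum c F"
    unfolding diff_dirac_sum_def
  proof (rule measure_of_eq)
    fix S :: "'a set"
    assume "S \<in> sigma_sets UNIV (sets borel)"
    then have "S \<in> sets borel"
      using sets.sigma_sets_eq[of "borel :: 'a measure"] by simp
    define P where "P = {(x, y). x \<in> F \<and> y \<in> F \<and> x - y \<in> S}"
    have "P \<subseteq> F \<times> F" "finite P"
      using \<open>finite F\<close> by (auto simp: P_def intro: finite_subset[of _ "F \<times> F"])
    have "(\<lambda>(x, y). x - y) -` S \<inter> (F \<times> F) = P"
      by (auto simp: P_def)
    then have "emeasure ?N S = emeasure (density (count_space (F \<times> F)) (\<lambda>_. ennreal c)) P"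
      using emeasure_distr[OF meas \<open>S \<in> sets borel\<close>] by simp
    also have "\<dots> = ennreal c * emeasure (count_space (F \<times> F)) P"
      using \<open>P \<subseteq> F \<times> F\<close> by (simp add: emeasure_density nn_integral_cmult_indicator)
    also have "\<dots> = ennreal (c * real (card P))"
      using \<open>finite P\<close> \<open>P \<subseteq> F \<times> F\<close> \<open>c \<ge> 0\<close>
      by (simp add: emeasure_count_space_finite ennreal_mult ennreal_of_nat_eq_real_of_nat)
    finally show "emeasure ?N S = ennreal (c * real (card P))" .
  qed simp
  finally show ?thesis
    by simp
qed

lemma integral_diff_dirac_sum:
  fixes F :: "'a::topological_ab_group_add set"
    and f :: "'a \<Rightarrow> 'b::{banach, second_countable_topology}"
  assumes "finite F" and "c \<ge> 0" and "f \<in> borel_measurable borel"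
  shows "integral\<^sup>L (diff_dirac_sum c F) f = (\<Sum>x\<in>F. \<Sum>y\<in>F. c *\<^sub>R f (x - y))"
proof -
  have meas: "(\<lambda>(x, y). x - y) \<in> measurable (density (count_space (F \<times> F)) (\<lambda>_. ennreal c)) borel"
    by (simp add: measurable_count_space_eq1 cong: measurable_cong_sets)
  have "integral\<^sup>L (diff_dirac_sum c F) f
      = integral\<^sup>L (density (count_space (F \<times> F)) (\<lambda>_. ennreal c)) (\<lambda>(x, y). f (x - y))"
    unfolding diff_dirac_sum_eq_distr[OF assms(1,2)] integral_distr[OF meas assms(3)]
    by (simp add: case_prod_beta')
  also have "\<dots> = integral\<^sup>L (count_space (F \<times> F)) (\<lambda>(x, y). c *\<^sub>R f (x - y))"
    using \<open>c \<ge> 0\<close> by (simp add: integral_density case_prod_beta')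
  also have "\<dots> = (\<Sum>x\<in>F. \<Sum>y\<in>F. c *\<^sub>R f (x - y))"
    using \<open>finite F\<close> by (simp add: lebesgue_integral_count_space_finite sum.cartesian_product)
  finally show ?thesis .
qed

lemma integral_diff_dirac_sum_separated:
  fixes F :: "'a::topological_ab_group_add set"
    and f :: "'a \<Rightarrow> 'b::{banach, second_countable_topology}"
  assumes "finite F" and "c \<ge> 0" and "f \<in> borel_measurable borel"
    and sep: "\<And>x y. x \<in> F \<Longrightarrow> y \<in> F \<Longrightarrow> x \<noteq> y \<Longrightarrow> f (x - y) = 0"
  shows "integral\<^sup>L (diff_dirac_sum c F) f = (c * card F) *\<^sub>R f 0"
proof -
  have "(\<Sum>y\<in>F. c *\<^sub>R f (x - y)) = c *\<^sub>R f 0" if "x \<in> F" for x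
  proof -
    have "(\<Sum>y\<in>F. c *\<^sub>R f (x - y)) = c *\<^sub>R f (x - x) + (\<Sum>y\<in>F - {x}. c *\<^sub>R f (x - y))"
      using \<open>finite F\<close> \<open>x \<in> F\<close> by (rule sum.remove)
    also have "(\<Sum>y\<in>F - {x}. c *\<^sub>R f (x - y)) = 0"
      using sep \<open>x \<in> F\<close> by (intro sum.neutral) auto
    finally show ?thesis
      by simp
  qed
  then have "(\<Sum>x\<in>F. \<Sum>y\<in>F. c *\<^sub>R f (x - y)) = (\<Sum>x\<in>F. c *\<^sub>R f 0)"
    by (rule sum.cong[OF refl])
  then show ?thesis
    using integral_diff_dirac_sum[OF assms(1-3)] by (simp add: scaleR_sum_left[symmetric] mult.commute)
qed

lemma radon_measure_sets: "radon_measure \<gamma> \<Longrightarrow> sets \<gamma> = sets borel"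
  by (simp add: radon_measure_def)

lemma radon_measure_space: "radon_measure \<gamma> \<Longrightarrow> space \<gamma> = UNIV"
  using sets_eq_imp_space_eq[OF radon_measure_sets] by simp

lemma integrable_indicator_compact:
  assumes "radon_measure \<gamma>" and "compact K"
  shows "integrable \<gamma> (indicator K :: 'a::t2_space \<Rightarrow> real)"
proof -
  have "K \<in> sets \<gamma>"
    using radon_measure_sets[OF assms(1)] compact_imp_closed[OF assms(2)] by simp
  moreover have "emeasure \<gamma> K < \<infinity>"
    using assms unfolding radon_measure_def by blast
  ultimately show ?thesis
    by (simp add: integrable_indicator_iff)
qed

lemma integral_tendsto_measure_compact_dominated:
  fixes g :: "nat \<Rightarrow> 'a::t2_space \<Rightarrow> real"
  assumes "radon_measure \<gamma>" and "compact K" and "B \<in> sets borel"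
    and "\<And>k. g k \<in> borel_measurable borel"
    and "\<And>k x. \<bar>g k x\<bar> \<le> indicator K x"
    and "\<And>x. (\<lambda>k. g k x) \<longlonglongrightarrow> indicator B x"
  shows "(\<lambda>k. integral\<^sup>L \<gamma> (g k)) \<longlonglongrightarrow> measure \<gamma> B"
proof -
  have sets: "sets \<gamma> = sets borel"
    using assms(1) by (rule radon_measure_sets)
  have "(\<lambda>k. integral\<^sup>L \<gamma> (g k)) \<longlonglongrightarrow> integral\<^sup>L \<gamma> (indicator B :: 'a \<Rightarrow> real)"
  proof (rule integral_dominated_convergence[where w = "indicator K"])
    show "indicator B \<in> borel_measurable \<gamma>" "\<And>k. g k \<in> borel_measurable \<gamma>"
      using assms(3,4) by (simp_all add: measurable_cong_sets[OF sets refl])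
    show "integrable \<gamma> (indicator K :: 'a \<Rightarrow> real)"
      using assms(1,2) by (rule integrable_indicator_compact)
    show "AE x in \<gamma>. (\<lambda>k. g k x) \<longlonglongrightarrow> indicator B x" "\<And>k. AE x in \<gamma>. norm (g k x) \<le> indicator K x"
      using assms(5,6) by simp_all
  qed
  also have "integral\<^sup>L \<gamma> (indicator B :: 'a \<Rightarrow> real) = measure \<gamma> B"
    using assms(3) sets by simp
  finally show ?thesis .
qed

lemma shrinking_bump_functions:
  fixes W :: "'a::{t2_space, first_countable_topology} set"
  assumes lc: "locally_compact_space (euclidean :: 'a topology)"
    and "open W" and "a \<in> W"
  obtains g :: "nat \<Rightarrow> 'a \<Rightarrow> real" and K
  where "compact K" "\<And>k. continuous_on UNIV (g k)" "\<And>k x. 0 \<le> g k x \<and> g k x \<le> 1"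
    "\<And>k. g k a = 1" "\<And>k. {x. g k x \<noteq> 0} \<subseteq> W \<inter> K"
    "\<And>k. compact (closure {x. g k x \<noteq> 0})" "\<And>x. (\<lambda>k. g k x) \<longlonglongrightarrow> indicator {a} x"
proof -
  obtain U K where "open U" "compact K" "a \<in> U" "U \<subseteq> K"
    using lc[unfolded locally_compact_space_def, rule_format, of a] by auto
  obtain B :: "nat \<Rightarrow> 'a set" where B: "\<And>k. open (B k)" "\<And>k. a \<in> B k"
    "\<And>S. open S \<Longrightarrow> a \<in> S \<Longrightarrow> eventually (\<lambda>k. B k \<subseteq> S) sequentially"
    by (rule countable_basis_at_decseq[of a]) (rule that)
  have "\<forall>k. \<exists>h :: 'a \<Rightarrow> real. continuous_on UNIV h \<and> (\<forall>x. 0 \<le> h x \<and> h x \<le> 1) \<and> h a = 1 \<and>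
      {x. h x \<noteq> 0} \<subseteq> B k \<inter> W \<inter> U \<and> compact (closure {x. h x \<noteq> 0})"
  proof
    fix k
    have nhd: "compact {a}" "open (B k \<inter> W \<inter> U)" "{a} \<subseteq> B k \<inter> W \<inter> U"
      using B(1,2) \<open>open W\<close> \<open>open U\<close> \<open>a \<in> W\<close> \<open>a \<in> U\<close> by auto
    obtain h :: "'a \<Rightarrow> real" where "continuous_on UNIV h" "\<And>x. 0 \<le> h x \<and> h x \<le> 1"
      "\<And>x. x \<in> {a} \<Longrightarrow> h x = 1" "{x. h x \<noteq> 0} \<subseteq> B k \<inter> W \<inter> U"
      "compact (closure {x. h x \<noteq> 0})"
      by (rule Urysohn_locally_compact[OF lc nhd]) (rule that)
    then show "\<exists>h :: 'a \<Rightarrow> real. continuous_on UNIV h \<and> (\<forall>x. 0 \<le> h x \<and> h x \<le> 1) \<and> h a = 1 \<and>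
      {x. h x \<noteq> 0} \<subseteq> B k \<inter> W \<inter> U \<and> compact (closure {x. h x \<noteq> 0})"
      by (intro exI[of _ h]) simp
  qed
  then obtain g :: "nat \<Rightarrow> 'a \<Rightarrow> real" where g: "\<And>k. continuous_on UNIV (g k)"
    "\<And>k x. 0 \<le> g k x \<and> g k x \<le> 1" "\<And>k. g k a = 1" "\<And>k. {x. g k x \<noteq> 0} \<subseteq> B k \<inter> W \<inter> U"
    "\<And>k. compact (closure {x. g k x \<noteq> 0})"
    by metis
  have conv: "(\<lambda>k. g k x) \<longlonglongrightarrow> indicator {a} x" for x
  proof (cases "x = a")
    case False
    then have "eventually (\<lambda>k. B k \<subseteq> - {x}) sequentially"
      by (intro B(3)) auto
    then have "eventually (\<lambda>k. g k x = indicator {a} x) sequentially"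
      by (rule eventually_mono) (use g(4) False in auto)
    then show ?thesis
      by (rule tendsto_eventually)
  qed (simp add: g(3))
  have supp: "{x. g k x \<noteq> 0} \<subseteq> W \<inter> K" for k
    using g(4)[of k] \<open>U \<subseteq> K\<close> by blast
  show thesis
    by (rule that[OF \<open>compact K\<close> g(1,2,3) supp g(5) conv])
qed

lemma integral_diff_dirac_sum_bump:
  fixes F W :: "'a::topological_ab_group_add set" and g :: "'a \<Rightarrow> real"
  assumes "finite F" and "c \<ge> 0"
    and sep: "\<And>x y. x \<in> F \<Longrightarrow> y \<in> F \<Longrightarrow> x - y \<in> W \<Longrightarrow> x = y"
    and "continuous_on UNIV g" and "g 0 = 1" and supp: "{x. g x \<noteq> 0} \<subseteq> W"
  shows "integral\<^sup>L (diff_dirac_sum c F) (\<lambda>x. complex_of_real (g x)) = complex_of_real (c * card F)"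
proof -
  have separated: "complex_of_real (g (x - y)) = 0" if "x \<in> F" "y \<in> F" "x \<noteq> y" for x y
  proof -
    have "x - y \<notin> W"
      using sep that by blast
    then show ?thesis
      using supp by auto
  qed
  have "(\<lambda>x. complex_of_real (g x)) \<in> borel_measurable borel"
    using \<open>continuous_on UNIV g\<close> by (intro borel_measurable_continuous_onI continuous_on_of_real)
  from integral_diff_dirac_sum_separated[OF \<open>finite F\<close> \<open>c \<ge> 0\<close> this separated]
  show ?thesis
    using \<open>g 0 = 1\<close> by (simp add: scaleR_conv_of_real)
qed

lemma integral_gamma_dens_bump:
  fixes F W :: "'a::topological_ab_group_add set" and g :: "'a \<Rightarrow> real"
  assumes "finite F" and "\<And>x y. x \<in> F \<Longrightarrow> y \<in> F \<Longrightarrow> x - y \<in> W \<Longrightarrow> x = y"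
    and "continuous_on UNIV g" and "g 0 = 1" and "{x. g x \<noteq> 0} \<subseteq> W"
  shows "integral\<^sup>L (gamma_dens vol A F) (\<lambda>x. complex_of_real (g x))
    = complex_of_real (card F / measure vol A)"
  unfolding gamma_dens_def by (subst integral_diff_dirac_sum_bump[OF assms(1) _ assms(2-5)]) simp_all

lemma integral_gamma_count_bump:
  fixes F W :: "'a::topological_ab_group_add set" and g :: "'a \<Rightarrow> real"
  assumes "finite F" and "\<And>x y. x \<in> F \<Longrightarrow> y \<in> F \<Longrightarrow> x - y \<in> W \<Longrightarrow> x = y"
    and "continuous_on UNIV g" and "g 0 = 1" and "{x. g x \<noteq> 0} \<subseteq> W"
  shows "integral\<^sup>L (gamma_count F) (\<lambda>x. complex_of_real (g x))
    = complex_of_real (if F = {} then 0 else 1)"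
proof (cases "F = {}")
  case False
  then have "1 / real (card F) * real (card F) = 1"
    using \<open>finite F\<close> by simp
  then show ?thesis
    unfolding gamma_count_def if_not_P[OF False]
    by (subst integral_diff_dirac_sum_bump[OF assms(1) _ assms(2-5)]) simp_all
qed (simp add: gamma_count_def)

text \<open>Every bump yields the same sequence \<open>s\<close>, so the \<open>\<gamma>\<close>-integrals of bumps shrinking to \<open>a\<close>
  all equal its limit; dominated convergence identifies that limit with \<open>\<gamma> {a}\<close>.\<close>
lemma tendsto_measure_singleton_vague_limit:
  fixes \<gamma> :: "'a::{t2_space, second_countable_topology} measure"
  assumes lc: "locally_compact_space (euclidean :: 'a topology)"
    and "radon_measure \<gamma>" and vague: "vague_converges \<mu>s \<gamma>"
    and "open W" and "a \<in> W"
    and bump: "\<And>g n. continuous_on UNIV g \<Longrightarrow> g a = 1 \<Longrightarrow> {x. g x \<noteq> 0} \<subseteq> W \<Longrightarrow>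
      integral\<^sup>L (\<mu>s n) (\<lambda>x. complex_of_real (g x)) = complex_of_real (s n)"
  shows "s \<longlonglongrightarrow> measure \<gamma> {a}"
proof -
  obtain g :: "nat \<Rightarrow> 'a \<Rightarrow> real" and K where "compact K" and g: "\<And>k. continuous_on UNIV (g k)"
    "\<And>k x. 0 \<le> g k x \<and> g k x \<le> 1" "\<And>k. g k a = 1" "\<And>k. {x. g k x \<noteq> 0} \<subseteq> W \<inter> K"
    "\<And>k. compact (closure {x. g k x \<noteq> 0})" "\<And>x. (\<lambda>k. g k x) \<longlonglongrightarrow> indicator {a} x"
    by (rule shrinking_bump_functions[OF lc \<open>open W\<close> \<open>a \<in> W\<close>]) (rule that)
  have s_lim: "s \<longlonglongrightarrow> integral\<^sup>L \<gamma> (g k)" for k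
  proof -
    have "continuous_on UNIV (\<lambda>x. complex_of_real (g k x))
        \<and> compact (closure {x. complex_of_real (g k x) \<noteq> 0})"
      using g(1,5)[of k] by (simp add: continuous_on_of_real)
    then have "(\<lambda>n. integral\<^sup>L (\<mu>s n) (\<lambda>x. complex_of_real (g k x)))
        \<longlonglongrightarrow> integral\<^sup>L \<gamma> (\<lambda>x. complex_of_real (g k x))"
      by (rule vague[unfolded vague_converges_def, rule_format])
    moreover have "integral\<^sup>L (\<mu>s n) (\<lambda>x. complex_of_real (g k x)) = complex_of_real (s n)" for n
      using g(1,3,4)[of k] by (intro bump) auto
    ultimately show ?thesis
      by (simp add: tendsto_of_real_iff)
  qed
  have "(\<lambda>k. integral\<^sup>L \<gamma> (g k)) \<longlonglongrightarrow> measure \<gamma> {a}"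
  proof (rule integral_tendsto_measure_compact_dominated[OF \<open>radon_measure \<gamma>\<close> \<open>compact K\<close>])
    show "\<bar>g k x\<bar> \<le> indicator K x" for k x
      using g(2,4)[of k] by (cases "g k x = 0") (auto simp: indicator_def)
    show "g k \<in> borel_measurable borel" for k
      using g(1) by (rule borel_measurable_continuous_onI)
    show "(\<lambda>k. g k x) \<longlonglongrightarrow> indicator {a} x" for x
      by (rule g(6))
  qed simp
  moreover have "(\<lambda>k. integral\<^sup>L \<gamma> (g k)) = (\<lambda>k. integral\<^sup>L \<gamma> (g 0))"
    by (rule ext) (rule LIMSEQ_unique[OF s_lim s_lim])
  ultimately have "integral\<^sup>L \<gamma> (g 0) = measure \<gamma> {a}"
    by (simp add: LIMSEQ_const_iff)
  then show ?thesis
    using s_lim[of 0] by simp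
qed

lemma tendsto_finite_range_eventually_eq:
  fixes f :: "'b \<Rightarrow> 'a::t1_space"
  assumes "(f \<longlongrightarrow> l) F" and "finite S" and "eventually (\<lambda>x. f x \<in> S) F"
  shows "eventually (\<lambda>x. f x = l) F"
proof -
  have "closed (S - {l})"
    using \<open>finite S\<close> by (simp add: finite_imp_closed)
  then have "open (- (S - {l}))"
    by (rule open_Compl)
  moreover have "l \<in> - (S - {l})"
    by simp
  ultimately have "eventually (\<lambda>x. f x \<in> - (S - {l})) F"
    by (rule topological_tendstoD[OF assms(1)])
  with assms(3) show ?thesis
    by eventually_elim auto
qed

lemma radon_measure_compact_null_if_integrals_vanish:
  fixes \<gamma> :: "'a::t2_space measure"
  assumes lc: "locally_compact_space (euclidean :: 'a topology)"
    and "radon_measure \<gamma>" and "compact K"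
    and vanish: "\<And>g :: 'a \<Rightarrow> real. continuous_on UNIV g \<Longrightarrow> compact (closure {x. g x \<noteq> 0}) \<Longrightarrow>
      integral\<^sup>L \<gamma> g = 0"
  shows "K \<in> null_sets \<gamma>"
proof -
  have sets: "sets \<gamma> = sets borel"
    using \<open>radon_measure \<gamma>\<close> by (rule radon_measure_sets)
  obtain g :: "'a \<Rightarrow> real" where g: "continuous_on UNIV g" "\<And>x. 0 \<le> g x \<and> g x \<le> 1"
    "\<And>x. x \<in> K \<Longrightarrow> g x = 1" "{x. g x \<noteq> 0} \<subseteq> UNIV" "compact (closure {x. g x \<noteq> 0})"
    by (rule Urysohn_locally_compact[OF lc \<open>compact K\<close> open_UNIV subset_UNIV]) (rule that)
  define C where "C = closure {x. g x \<noteq> 0}"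
  have bound: "norm (g x) \<le> norm (indicator C x :: real)" for x
  proof (cases "g x = 0")
    case False
    then have "x \<in> C"
      unfolding C_def by (intro closure_subset[THEN subsetD]) simp
    then show ?thesis
      using g(2)[of x] by simp
  qed simp
  have int_C: "integrable \<gamma> (indicator C :: 'a \<Rightarrow> real)"
    unfolding C_def using \<open>radon_measure \<gamma>\<close> g(5) by (rule integrable_indicator_compact)
  have meas: "g \<in> borel_measurable \<gamma>"
    unfolding measurable_cong_sets[OF sets refl] by (rule borel_measurable_continuous_onI[OF g(1)])
  have int_g: "integrable \<gamma> g"
    by (rule Bochner_Integration.integrable_bound[OF int_C meas AE_I2[OF bound]])
  have "measure \<gamma> K = integral\<^sup>L \<gamma> (indicator K :: 'a \<Rightarrow> real)"
    by (simp add: radon_measure_space[OF \<open>radon_measure \<gamma>\<close>])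
  also have "\<dots> \<le> integral\<^sup>L \<gamma> g"
    by (rule integral_mono[OF integrable_indicator_compact[OF \<open>radon_measure \<gamma>\<close> \<open>compact K\<close>] int_g])
      (auto simp: g(2,3) indicator_def)
  also have "\<dots> = 0"
    using g(1,5) by (rule vanish)
  finally have "measure \<gamma> K = 0"
    using measure_nonneg[of \<gamma> K] by linarith
  moreover have "K \<in> sets \<gamma>" "emeasure \<gamma> K < \<infinity>"
    using sets compact_imp_closed[OF \<open>compact K\<close>] \<open>radon_measure \<gamma>\<close> \<open>compact K\<close>
    by (auto simp: radon_measure_def)
  ultimately show ?thesis
    by (auto simp: null_sets_def emeasure_eq_ennreal_measure)
qed

lemma radon_measure_null_if_integrals_vanish:
  fixes \<gamma> :: "'a::{t2_space, second_countable_topology} measure"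
  assumes lc: "locally_compact_space (euclidean :: 'a topology)"
    and "radon_measure \<gamma>"
    and "\<And>g :: 'a \<Rightarrow> real. continuous_on UNIV g \<Longrightarrow> compact (closure {x. g x \<noteq> 0}) \<Longrightarrow>
      integral\<^sup>L \<gamma> g = 0"
  shows "emeasure \<gamma> S = 0"
proof -
  obtain \<C> :: "'a set set" where "countable \<C>" "\<Union>\<C> = UNIV" "\<And>C. C \<in> \<C> \<Longrightarrow> compact C"
    by (rule locally_compact_imp_countable_compact_cover[OF lc]) (rule that)
  moreover have "C \<in> null_sets \<gamma>" if "compact C" for C
    using lc \<open>radon_measure \<gamma>\<close> that assms(3) by (rule radon_measure_compact_null_if_integrals_vanish)
  ultimately have "UNIV \<in> null_sets \<gamma>"
    using null_sets_UN'[of \<C> "\<lambda>C. C" \<gamma>] by simp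
  then have "emeasure \<gamma> UNIV = 0"
    by (rule null_setsD1)
  moreover have "emeasure \<gamma> S \<le> emeasure \<gamma> UNIV"
    using \<open>UNIV \<in> null_sets \<gamma>\<close> by (intro emeasure_mono) auto
  ultimately show ?thesis
    by simp
qed

lemma ex_strict_mono_iff_frequently:
  "(\<exists>r::nat \<Rightarrow> nat. strict_mono r \<and> (\<forall>k. P (r k))) \<longleftrightarrow> frequently P sequentially"
proof
  assume "\<exists>r::nat \<Rightarrow> nat. strict_mono r \<and> (\<forall>k. P (r k))"
  then obtain r :: "nat \<Rightarrow> nat" where "strict_mono r" "\<forall>k. P (r k)"
    by blast
  then have "\<exists>n\<ge>N. P n" for N
    using seq_suble[OF \<open>strict_mono r\<close>, of N] by blast
  then show "frequently P sequentially"
    unfolding frequently_sequentially by blast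
next
  assume "frequently P sequentially"
  then have "infinite {n. P n}"
    by (simp add: frequently_cofinite cofinite_eq_sequentially[symmetric])
  show "\<exists>r::nat \<Rightarrow> nat. strict_mono r \<and> (\<forall>k. P (r k))"
    using infinite_enumerate[OF \<open>infinite {n. P n}\<close>] by simp
qed

lemma ex_all_greater_iff_eventually:
  "(\<exists>N. \<forall>n>N. P n) \<longleftrightarrow> eventually P sequentially"
proof
  assume "\<exists>N. \<forall>n>N. P n"
  then obtain N where "\<forall>n>N. P n"
    by blast
  then show "eventually P sequentially"
    by (intro eventually_sequentiallyI[of "Suc N"]) auto
next
  assume "eventually P sequentially"
  then obtain N where "\<forall>n\<ge>N. P n"
    unfolding eventually_sequentially by blast
  then show "\<exists>N. \<forall>n>N. P n"
    by (auto intro!: exI[of _ N])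
qed

lemma vague_limit_null_if_eventually_null:
  fixes \<gamma> :: "'a::{t2_space, second_countable_topology} measure"
  assumes lc: "locally_compact_space (euclidean :: 'a topology)"
    and "radon_measure \<gamma>" and vague: "vague_converges \<mu>s \<gamma>"
    and null: "eventually (\<lambda>n. \<mu>s n = null_measure borel) sequentially"
  shows "emeasure \<gamma> S = 0"
proof (rule radon_measure_null_if_integrals_vanish[OF lc \<open>radon_measure \<gamma>\<close>])
  fix g :: "'a \<Rightarrow> real"
  assume "continuous_on UNIV g" "compact (closure {x. g x \<noteq> 0})"
  then have "(\<lambda>n. integral\<^sup>L (\<mu>s n) (\<lambda>x. complex_of_real (g x)))
      \<longlonglongrightarrow> integral\<^sup>L \<gamma> (\<lambda>x. complex_of_real (g x))"
    by (intro vague[unfolded vague_converges_def, rule_format]) (simp add: continuous_on_of_real)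
  moreover have "(\<lambda>n. integral\<^sup>L (\<mu>s n) (\<lambda>x. complex_of_real (g x))) \<longlonglongrightarrow> 0"
    by (rule tendsto_eventually) (rule eventually_mono[OF null], simp)
  ultimately have "integral\<^sup>L \<gamma> (\<lambda>x. complex_of_real (g x)) = 0"
    by (rule LIMSEQ_unique)
  then show "integral\<^sup>L \<gamma> g = 0"
    by simp
qed

lemma counting_autocorrelation_at_zero:
  fixes \<gamma> :: "'a::{topological_ab_group_add, t2_space, second_countable_topology} measure"
    and F :: "nat \<Rightarrow> 'a set"
  assumes lc: "locally_compact_space (euclidean :: 'a topology)"
    and "radon_measure \<gamma>" and vague: "vague_converges (\<lambda>n. gamma_count (F n)) \<gamma>"
    and lim: "(\<lambda>n. if F n = {} then 0 else 1) \<longlonglongrightarrow> measure \<gamma> {0}"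
  shows "(measure \<gamma> {0} = 1 \<longleftrightarrow> (\<exists>r::nat \<Rightarrow> nat. strict_mono r \<and> (\<forall>k. F (r k) \<noteq> {}))) \<and>
    ((\<exists>r::nat \<Rightarrow> nat. strict_mono r \<and> (\<forall>k. F (r k) \<noteq> {})) \<longleftrightarrow> (\<exists>N. \<forall>n>N. F n \<noteq> {})) \<and>
    ((\<exists>N. \<forall>n>N. F n \<noteq> {}) \<longleftrightarrow> (\<exists>S\<in>sets borel. emeasure \<gamma> S \<noteq> 0))"
proof -
  have subsequence: "(\<exists>r::nat \<Rightarrow> nat. strict_mono r \<and> (\<forall>k. F (r k) \<noteq> {}))
      \<longleftrightarrow> frequently (\<lambda>n. F n \<noteq> {}) sequentially"
    by (rule ex_strict_mono_iff_frequently)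
  have ev: "eventually (\<lambda>n. (if F n = {} then 0 else 1) = measure \<gamma> {0}) sequentially"
    using lim by (rule tendsto_finite_range_eventually_eq[where S = "{0, 1}"]) auto
  then obtain n where "(if F n = {} then 0 else 1) = measure \<gamma> {0}"
    using eventually_happens'[OF sequentially_bot] by blast
  then consider (nonempty) "measure \<gamma> {0} = 1" | (empty) "measure \<gamma> {0} = 0"
    by (auto split: if_splits)
  then show ?thesis
  proof cases
    case nonempty
    then have "eventually (\<lambda>n. F n \<noteq> {}) sequentially"
      by (auto intro: eventually_mono[OF ev] split: if_splits)
    moreover have "{0 :: 'a} \<in> sets borel" and "emeasure \<gamma> {0} \<noteq> 0"
      using nonempty by (auto simp: borel_closed measure_def)
    ultimately show ?thesis
      unfolding subsequence ex_all_greater_iff_eventually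
      using nonempty eventually_frequently[OF sequentially_bot] by blast
  next
    case empty
    then have "eventually (\<lambda>n. F n = {}) sequentially"
      by (auto intro: eventually_mono[OF ev] split: if_splits)
    then have "\<not> frequently (\<lambda>n. F n \<noteq> {}) sequentially"
      by (simp add: not_frequently)
    moreover have "emeasure \<gamma> S = 0" for S
      using lc \<open>radon_measure \<gamma>\<close> vague
    proof (rule vague_limit_null_if_eventually_null)
      show "eventually (\<lambda>n. gamma_count (F n) = null_measure borel) sequentially"
        using \<open>eventually (\<lambda>n. F n = {}) sequentially\<close>
        by (rule eventually_mono) (simp add: gamma_count_def)
    qed
    ultimately show ?thesis
      unfolding subsequence ex_all_greater_iff_eventually
      using empty eventually_frequently[OF sequentially_bot] by auto
  qed
qed

theorem lemma3p8:
  fixes vol :: "'a::{topological_ab_group_add, t2_space, second_countable_topology} measure"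
    and L :: "'a set"
    and A :: "nat \<Rightarrow> 'a set"
  assumes lc: "locally_compact_space (euclidean :: 'a topology)"
    and haar: "is_haar_measure vol"
    and ud: "uniformly_discrete L"
    and vh: "van_hove vol A"
  shows
    "(\<forall>\<gamma>. radon_measure \<gamma> \<and> vague_converges (\<lambda>n. gamma_dens vol (A n) (L \<inter> A n)) \<gamma> \<longrightarrow>
        (\<exists>d. (\<lambda>n. real (card (L \<inter> A n)) / measure vol (A n)) \<longlonglongrightarrow> d \<and>
             measure \<gamma> {0} = d))
   \<and>
    (\<forall>\<gamma>. radon_measure \<gamma> \<and> vague_converges (\<lambda>n. gamma_count (L \<inter> A n)) \<gamma> \<longrightarrow>
        ((measure \<gamma> {0} = 1 \<longleftrightarrow> (\<exists>r::nat \<Rightarrow> nat. strict_mono r \<and> (\<forall>k. L \<inter> A (r k) \<noteq> {}))) \<and>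
         ((\<exists>r::nat \<Rightarrow> nat. strict_mono r \<and> (\<forall>k. L \<inter> A (r k) \<noteq> {})) \<longleftrightarrow> (\<exists>N. \<forall>n>N. L \<inter> A n \<noteq> {})) \<and>
         ((\<exists>N. \<forall>n>N. L \<inter> A n \<noteq> {}) \<longleftrightarrow> (\<exists>S\<in>sets borel. emeasure \<gamma> S \<noteq> 0))))"
proof -
  obtain W where "open W" "0 \<in> W" "\<And>x y. x \<in> L \<Longrightarrow> y \<in> L \<Longrightarrow> x - y \<in> W \<Longrightarrow> x = y"
    by (rule uniformly_discrete_imp_separating_nhd[OF ud]) (rule that)
  then have separated: "\<And>x y. x \<in> L \<inter> A n \<Longrightarrow> y \<in> L \<inter> A n \<Longrightarrow> x - y \<in> W \<Longrightarrow> x = y" for n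
    by blast
  have finite: "finite (L \<inter> A n)" for n
    using vh ud by (simp add: van_hove_def uniformly_discrete_Int_compact_finite)
  have density: "(\<lambda>n. real (card (L \<inter> A n)) / measure vol (A n)) \<longlonglongrightarrow> measure \<gamma> {0}"
    if "radon_measure \<gamma>" "vague_converges (\<lambda>n. gamma_dens vol (A n) (L \<inter> A n)) \<gamma>" for \<gamma>
    by (rule tendsto_measure_singleton_vague_limit[OF lc that \<open>open W\<close> \<open>0 \<in> W\<close>])
      (rule integral_gamma_dens_bump[OF finite separated])
  have counting: "(\<lambda>n. if L \<inter> A n = {} then 0 else 1) \<longlonglongrightarrow> measure \<gamma> {0}"
    if "radon_measure \<gamma>" "vague_converges (\<lambda>n. gamma_count (L \<inter> A n)) \<gamma>" for \<gamma>
    by (rule tendsto_measure_singleton_vague_limit[OF lc that \<open>open W\<close> \<open>0 \<in> W\<close>])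
      (rule integral_gamma_count_bump[OF finite separated])
  show ?thesis
    using density counting_autocorrelation_at_zero[OF lc _ _ counting] by blast
qed

end
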